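(* Let $(\mathcal{F}_\alpha)_{\alpha<\omega_1}$ be a transfinite family and let $\alpha<\beta<\omega_1$ and $\gamma<\omega_1$. Then (a) there is $m\in\mathbb{N}$ with $(\mathcal{F}_\alpha\cap[\{m,m+1,\dots\}]^{<\infty})\sqcup\mathcal{F}_\gamma\subset(\mathcal{F}_\beta\cap[\{m,m+1,\dots\}]^{<\infty})\sqcup\mathcal{F}_\gamma$, and (b) for every infinite $N\subset\mathbb{N}$, $\mathbb{I}(\mathcal{F}_\alpha\sqcup\mathcal{F}_\gamma,N)<\mathbb{I}(\mathcal{F}_\beta\sqcup\mathcal{F}_\gamma,N)$.
   Context: For sets $\mathcal{A},\mathcal{B}$ of finite subsets of $\mathbb{N}$, $\mathcal{A}\sqcup\mathcal{B}=\{A\cup B:A\in\mathcal{A},B\in\mathcal{B}\}$. Transfinite family: given, for each countable limit ordinal $\alpha$, finite sets $A_n(\alpha)\subset[0,\alpha)$ increasing in $n$ with $\max A_n(\alpha)\to\alpha$, set $\mathcal{F}_0=\{\emptyset\}$, $\mathcal{F}_{\beta+1}=\{\{n\}\cup E:n\in\mathbb{N},E\in\mathcal{F}_\beta\}\cup\{\emptyset\}$, and for limit $\alpha$, $\mathcal{F}_\alpha=\{\emptyset\}\cup\{E\ne\emptyset:E\in\bigcup_{\beta\in A_{\min E}(\alpha)}\mathcal{F}_\beta\}$. For $N=\{n_1<n_2<\dots\}$, $\mathcal{F}^N=\{\{n_i:i\in E\}:E\in\mathcal{F}\}$. A hereditary $\mathcal{A}$ is $\alpha$-large on infinite $P$ if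 every infinite $M\subset P$ contains an infinite $N$ with $\mathcal{F}_\alpha^N\subset\mathcal{A}$; $\mathbb{I}(\mathcal{A},P)=\sup\{\alpha<\omega_1:\mathcal{A}\text{ is }\alpha\text{-large on }P\}$. *)

theory Defs
  imports Main "HOL-Library.Infinite_Set" "HOL-Library.Countable_Set"
begin

text \<open>Countable ordinals are modelled inside an arbitrary well-ordered type 'o
  together with a distinguished element w1 playing the role of omega_1:
  every element below w1 has countably many predecessors, and w1 itself has
  uncountably many. Then the initial segment below w1 is order-isomorphic to
  omega_1.\<close>

definition is_omega1 :: "'o::wellorder \<Rightarrow> bool" where
  "is_omega1 w1 \<longleftrightarrow> \<not> countable {y. y < w1} \<and> (\<forall>x<w1. countable {y. y < x})"

definition osuc :: "'o::wellorder \<Rightarrow> 'o" where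
  "osuc b = (LEAST d. b < d)"

definition is_zero :: "'o::wellorder \<Rightarrow> bool" where
  "is_zero a \<longleftrightarrow> (\<forall>b. \<not> b < a)"

definition is_limit :: "'o::wellorder \<Rightarrow> bool" where
  "is_limit a \<longleftrightarrow> \<not> is_zero a \<and> (\<forall>b<a. \<exists>d. b < d \<and> d < a)"

definition admissible_A :: "'o::wellorder \<Rightarrow> (nat \<Rightarrow> 'o \<Rightarrow> 'o set) \<Rightarrow> bool" where
  "admissible_A w1 A \<longleftrightarrow> (\<forall>a<w1. is_limit a \<longrightarrow>
      (\<forall>n. finite (A n a) \<and> A n a \<subseteq> {b. b < a} \<and> A n a \<subseteq> A (Suc n) a) \<and>
      (\<forall>b<a. \<exists>n. \<exists>d\<in>A n a. b \<le> d))"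

text \<open>F is the transfinite family determined by A (the recursion determines F
  uniquely on the ordinals below w1).\<close>
definition transfinite_family ::
    "'o::wellorder \<Rightarrow> (nat \<Rightarrow> 'o \<Rightarrow> 'o set) \<Rightarrow> ('o \<Rightarrow> nat set set) \<Rightarrow> bool" where
  "transfinite_family w1 A F \<longleftrightarrow>
     (\<forall>a<w1. is_zero a \<longrightarrow> F a = {{}}) \<and>
     (\<forall>b. osuc b < w1 \<longrightarrow> F (osuc b) = {insert n E | n E. E \<in> F b} \<union> {{}}) \<and>
     (\<forall>a<w1. is_limit a \<longrightarrow>
        F a = {{}} \<union> {E. E \<noteq> {} \<and> E \<in> (\<Union>b\<in>A (Min E) a. F b)})"

definition sqcup :: "nat set set \<Rightarrow> nat set set \<Rightarrow> nat set set" where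
  "sqcup \<A> \<B> = {X \<union> Y | X Y. X \<in> \<A> \<and> Y \<in> \<B>}"

text \<open>F^N for N = {n_0 < n_1 < ...} (enumerated from index 0).\<close>
definition fam_spread :: "nat set set \<Rightarrow> nat set \<Rightarrow> nat set set" where
  "fam_spread \<F> N = {enumerate N ` E | E. E \<in> \<F>}"

definition is_large ::
    "('o \<Rightarrow> nat set set) \<Rightarrow> 'o \<Rightarrow> nat set set \<Rightarrow> nat set \<Rightarrow> bool" where
  "is_large F a \<A> P \<longleftrightarrow>
     (\<forall>M. M \<subseteq> P \<and> infinite M \<longrightarrow> (\<exists>N\<subseteq>M. infinite N \<and> fam_spread (F a) N \<subseteq> \<A>))"

definition large_index ::
    "'o::wellorder \<Rightarrow> ('o \<Rightarrow> nat set set) \<Rightarrow> nat set set \<Rightarrow> nat set \<Rightarrow> 'o" where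
  "large_index w1 F \<A> P = (LEAST s. s \<le> w1 \<and> (\<forall>a<w1. is_large F a \<A> P \<longrightarrow> a \<le> s))"

end

theory Submission
  imports Defs "HOL-Library.Multiset" "HOL-Library.Diagonal_Subsequence"
begin

(* Part (a) is a transfinite induction on beta: at a limit beta, F alpha sits inside
   some F d with d in A n beta, and every set of F d with minimum at least n lies in F beta.

   For (b), largeness is read along subsequences: the family is alpha-large on N iff every
   subsequence g of N has a further subsequence g o h mapping each set of F alpha into it.
   This passes down to smaller ordinals (by (a), after shifting indices), holds at 0 and
   survives limits (diagonal subsequence), so the levels at which F alpha \<squnion> F gamma is large
   form an initial segment [0, c].  It is a proper segment below omega_1: removing the
   minimum x of a set in F a \<squnion> F b lands in one of finitely many F a' \<squnion> F b' with (a', b')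
   lexicographically smaller, so well-founded induction on finite multisets of pairs, together
   with the regularity of omega_1 to bound the levels obtained for the various x, yields a level
   that never maps into F alpha \<squnion> F gamma.  Hence the index of F alpha \<squnion> F gamma is c, whereas
   F beta \<squnion> F gamma is (c+1)-large: a set {n} \<union> X \<union> Z with X in F alpha, Z in F gamma and
   all elements large has {n} \<union> X in F (alpha+1), hence in F beta by (a). *)

section \<open>Successor and limit ordinals\<close>

lemma less_osuc: "(b::'o::wellorder) < d \<Longrightarrow> b < osuc b"
  unfolding osuc_def by (rule LeastI)

lemma osuc_least: "(b::'o::wellorder) < d \<Longrightarrow> osuc b \<le> d"
  unfolding osuc_def by (rule Least_le)

lemma less_osuc_iff: "(b::'o::wellorder) < d \<Longrightarrow> y < osuc b \<longleftrightarrow> y \<le> b"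
  by (metis leD linorder_not_le order_le_less_trans less_osuc osuc_least)

lemma osuc_not_limit: "(b::'o::wellorder) < d \<Longrightarrow> \<not> is_limit (osuc b)"
  unfolding is_limit_def by (metis leD less_osuc less_osuc_iff)

lemma osuc_inject: "(b::'o::wellorder) < a \<Longrightarrow> b' < a' \<Longrightarrow> osuc b = osuc b' \<Longrightarrow> b = b'"
  by (metis leD less_osuc linorder_neqE osuc_least)

lemma finite_osuc_preimage: "finite {b::'o::wellorder. b < a \<and> osuc b = a}"
proof (cases "\<exists>b0. b0 < a \<and> osuc b0 = a")
  case True
  then obtain b0 where "b0 < a" "osuc b0 = a" by blast
  then have "{b. b < a \<and> osuc b = a} \<subseteq> {b0}" using osuc_inject by blast
  then show ?thesis using finite_subset by blast
next
  case False
  then have "{b. b < a \<and> osuc b = a} = {}" by blast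
  then show ?thesis by (metis finite.emptyI)
qed

lemma ordinal_cases [case_names zero limit osuc]:
  fixes a :: "'o::wellorder"
  obtains "is_zero a" | "is_limit a" | b where "b < a" "a = osuc b"
proof (cases "is_zero a \<or> is_limit a")
  case False
  then obtain b where b: "b < a" "\<not> (\<exists>d. b < d \<and> d < a)"
    unfolding is_limit_def by blast
  then have "a = osuc b"
    using osuc_least[OF b(1)] less_osuc[OF b(1)] by force
  with b(1) show ?thesis by (rule that(3))
qed (use that in blast)

lemma ordinal_induct [case_names zero osuc limit]:
  fixes a :: "'o::wellorder"
  assumes zero: "\<And>a. is_zero a \<Longrightarrow> P a"
    and osuc: "\<And>b. b < osuc b \<Longrightarrow> P b \<Longrightarrow> P (osuc b)"
    and limit: "\<And>a. is_limit a \<Longrightarrow> (\<And>b. b < a \<Longrightarrow> P b) \<Longrightarrow> P a"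
  shows "P a"
proof (induction a rule: less_induct)
  case (less a)
  show ?case
    by (rule ordinal_cases[of a]) (use less zero osuc limit in auto)
qed

section \<open>Spreading families and largeness along subsequences\<close>

definition spreading :: "nat set set \<Rightarrow> bool" where
  "spreading \<F> \<longleftrightarrow> (\<forall>E\<in>\<F>. \<forall>f. (\<forall>x\<in>E. x \<le> f x) \<longrightarrow> f ` E \<in> \<F>)"

lemma spreadingD: "spreading \<F> \<Longrightarrow> E \<in> \<F> \<Longrightarrow> (\<And>x. x \<in> E \<Longrightarrow> x \<le> f x) \<Longrightarrow> f ` E \<in> \<F>"
  unfolding spreading_def by blast

lemma spreading_UN: "(\<And>c. c \<in> D \<Longrightarrow> spreading (G c)) \<Longrightarrow> spreading (\<Union>c\<in>D. G c)"
  unfolding spreading_def by blast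

lemma sqcup_mono: "\<A> \<subseteq> \<A>' \<Longrightarrow> \<B> \<subseteq> \<B>' \<Longrightarrow> sqcup \<A> \<B> \<subseteq> sqcup \<A>' \<B>'"
  unfolding sqcup_def by blast

definition spreads_into :: "nat set set \<Rightarrow> (nat \<Rightarrow> nat) \<Rightarrow> nat set set \<Rightarrow> bool" where
  "spreads_into \<F> k \<A> \<longleftrightarrow> (\<forall>E\<in>\<F>. k ` E \<in> \<A>)"

definition seq_large :: "nat set set \<Rightarrow> nat set set \<Rightarrow> nat set \<Rightarrow> bool" where
  "seq_large \<F> \<A> P \<longleftrightarrow>
     (\<forall>g::nat \<Rightarrow> nat. strict_mono g \<and> range g \<subseteq> P \<longrightarrow> (\<exists>h. strict_mono h \<and> spreads_into \<F> (g \<circ> h) \<A>))"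

definition never_spreads_into :: "nat set set \<Rightarrow> nat set set \<Rightarrow> bool" where
  "never_spreads_into \<F> \<A> \<longleftrightarrow> (\<forall>g. strict_mono g \<longrightarrow> \<not> spreads_into \<F> g \<A>)"

lemma seq_largeD:
  fixes g :: "nat \<Rightarrow> nat"
  shows "seq_large \<F> \<A> P \<Longrightarrow> strict_mono g \<Longrightarrow> range g \<subseteq> P \<Longrightarrow> \<exists>h. strict_mono h \<and> spreads_into \<F> (g \<circ> h) \<A>"
  unfolding seq_large_def by blast

lemma spreads_into_comp:
  assumes "spreading \<F>" "spreads_into \<F> k \<A>" "strict_mono h"
  shows "spreads_into \<F> (k \<circ> h) \<A>"
  unfolding spreads_into_def
proof
  fix E assume "E \<in> \<F>"
  then have "h ` E \<in> \<F>" using assms(1,3) spreadingD strict_mono_imp_increasing by blast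
  then show "(k \<circ> h) ` E \<in> \<A>" using assms(2) unfolding spreads_into_def by (metis image_comp)
qed

lemma enumerate_range_strict_mono:
  fixes g :: "nat \<Rightarrow> nat"
  assumes g: "strict_mono g"
  shows "enumerate (range g) = g"
proof
  have inf: "infinite (range g)"
    using g strict_mono_imp_inj_on range_inj_infinite by blast
  fix n show "enumerate (range g) n = g n"
  proof (induction n)
    case 0
    have "g 0 \<le> y" if "y \<in> range g" for y
      using that strict_mono_less_eq[OF g] by auto
    then show ?case
      unfolding enumerate_0 by (intro Least_equality) auto
  next
    case (Suc n)
    have "g (Suc n) \<le> y" if "y \<in> range g" "g n < y" for y
      using that strict_mono_less[OF g] strict_mono_less_eq[OF g] by (auto simp: Suc_le_eq)
    moreover have "g n < g (Suc n)" using g by (simp add: strict_mono_Suc_iff)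
    ultimately show ?case
      unfolding enumerate_Suc''[OF inf] Suc.IH by (intro Least_equality) auto
  qed
qed

lemma strict_mono_factor:
  fixes g k :: "nat \<Rightarrow> nat"
  assumes g: "strict_mono g" and k: "strict_mono k" and range: "range k \<subseteq> range g"
  obtains h where "strict_mono h" "k = g \<circ> h"
proof
  have gh: "g (inv g (k i)) = k i" for i
    using range by (simp add: f_inv_into_f subset_eq)
  then show "k = g \<circ> (inv g \<circ> k)" by auto
  show "strict_mono (inv g \<circ> k)"
  proof (rule strict_monoI)
    fix i j :: nat assume "i < j"
    then have "g (inv g (k i)) < g (inv g (k j))" using k gh by (simp add: strict_mono_less)
    then show "(inv g \<circ> k) i < (inv g \<circ> k) j" using g by (simp add: strict_mono_less)
  qed
qed

lemma is_large_iff_seq_large: "is_large F a \<A> P \<longleftrightarrow> seq_large (F a) \<A> P"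
proof
  assume large: "is_large F a \<A> P"
  show "seq_large (F a) \<A> P" unfolding seq_large_def
  proof (intro allI impI)
    fix g :: "nat \<Rightarrow> nat" assume g: "strict_mono g \<and> range g \<subseteq> P"
    have M: "range g \<subseteq> P \<and> infinite (range g)"
      using g strict_mono_imp_inj_on range_inj_infinite by blast
    obtain N where N: "N \<subseteq> range g" "infinite N" "fam_spread (F a) N \<subseteq> \<A>"
      using large[unfolded is_large_def, rule_format, OF M] by auto
    have "strict_mono (enumerate N)" "range (enumerate N) \<subseteq> range g"
      using N(1,2) strict_mono_enumerate range_enumerate by auto
    then obtain h where h: "strict_mono h" "enumerate N = g \<circ> h"
      using strict_mono_factor g by blast
    have "spreads_into (F a) (g \<circ> h) \<A>"
      using N(3) unfolding spreads_into_def fam_spread_def h(2)[symmetric] by blast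
    with h(1) show "\<exists>h. strict_mono h \<and> spreads_into (F a) (g \<circ> h) \<A>" by blast
  qed
next
  assume large: "seq_large (F a) \<A> P"
  show "is_large F a \<A> P" unfolding is_large_def
  proof (intro allI impI)
    fix M assume M: "M \<subseteq> P \<and> infinite M"
    then have "strict_mono (enumerate M)" "range (enumerate M) \<subseteq> P"
      using strict_mono_enumerate range_enumerate by auto
    then obtain h where h: "strict_mono h" "spreads_into (F a) (enumerate M \<circ> h) \<A>"
      using seq_largeD[OF large] by blast
    have mono: "strict_mono (enumerate M \<circ> h)"
      using \<open>strict_mono (enumerate M)\<close> h(1) by (rule strict_mono_o)
    let ?N = "range (enumerate M \<circ> h)"
    have "?N \<subseteq> M" using M range_enumerate by fastforce
    moreover have "infinite ?N"
      using mono strict_mono_imp_inj_on range_inj_infinite by blast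
    moreover have "fam_spread (F a) ?N \<subseteq> \<A>"
      using h(2) unfolding fam_spread_def spreads_into_def enumerate_range_strict_mono[OF mono]
      by blast
    ultimately show "\<exists>N\<subseteq>M. infinite N \<and> fam_spread (F a) N \<subseteq> \<A>" by blast
  qed
qed

lemma seq_large_singleton_empty: "{} \<in> \<A> \<Longrightarrow> seq_large {{}} \<A> P"
  unfolding seq_large_def spreads_into_def by (auto intro: strict_mono_id)

lemma seq_large_transfer:
  assumes s: "strict_mono s" and into: "\<And>E. E \<in> \<G> \<Longrightarrow> s ` E \<in> \<F>"
    and large: "seq_large \<F> \<A> P"
  shows "seq_large \<G> \<A> P"
  unfolding seq_large_def
proof (intro allI impI)
  fix g :: "nat \<Rightarrow> nat" assume "strict_mono g \<and> range g \<subseteq> P"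
  then obtain h where h: "strict_mono h" "spreads_into \<F> (g \<circ> h) \<A>"
    using seq_largeD[OF large] by blast
  have "spreads_into \<G> (g \<circ> (h \<circ> s)) \<A>"
    using h(2) into unfolding spreads_into_def by (metis comp_assoc image_comp)
  moreover have "strict_mono (h \<circ> s)" using h(1) s by (rule strict_mono_o)
  ultimately show "\<exists>h. strict_mono h \<and> spreads_into \<G> (g \<circ> h) \<A>" by blast
qed

lemma never_spreads_into_transfer:
  assumes s: "strict_mono s" and into: "\<And>E. E \<in> \<G> \<Longrightarrow> s ` E \<in> \<F>"
    and never: "never_spreads_into \<G> \<A>"
  shows "never_spreads_into \<F> \<A>"
  unfolding never_spreads_into_def
proof (intro allI impI notI)
  fix g :: "nat \<Rightarrow> nat" assume g: "strict_mono g" "spreads_into \<F> g \<A>"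
  have "spreads_into \<G> (g \<circ> s) \<A>"
    using g(2) into unfolding spreads_into_def by (metis image_comp)
  moreover have "strict_mono (g \<circ> s)" using g(1) s by (rule strict_mono_o)
  ultimately show False using never unfolding never_spreads_into_def by blast
qed

lemma not_seq_large_if_never_spreads_into:
  assumes "never_spreads_into \<F> \<A>" "infinite N"
  shows "\<not> seq_large \<F> \<A> N"
proof
  assume "seq_large \<F> \<A> N"
  then obtain h where "strict_mono h" "spreads_into \<F> (enumerate N \<circ> h) \<A>"
    using seq_largeD assms(2) strict_mono_enumerate range_enumerate by (metis order_refl)
  then show False
    using assms strict_mono_enumerate strict_mono_o unfolding never_spreads_into_def by blast
qed

lemma seq_large_Un:
  assumes "spreading \<F>" "seq_large \<F> \<A> P" "seq_large \<G> \<A> P"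
  shows "seq_large (\<F> \<union> \<G>) \<A> P"
  unfolding seq_large_def
proof (intro allI impI)
  fix g :: "nat \<Rightarrow> nat" assume g: "strict_mono g \<and> range g \<subseteq> P"
  then obtain h1 where h1: "strict_mono h1" "spreads_into \<F> (g \<circ> h1) \<A>"
    using seq_largeD[OF assms(2)] by blast
  have "strict_mono (g \<circ> h1)" "range (g \<circ> h1) \<subseteq> P"
    using g h1(1) strict_mono_o by auto
  then obtain h2 where h2: "strict_mono h2" "spreads_into \<G> (g \<circ> h1 \<circ> h2) \<A>"
    using seq_largeD[OF assms(3)] by blast
  have "spreads_into \<F> (g \<circ> h1 \<circ> h2) \<A>"
    using spreads_into_comp[OF assms(1) h1(2) h2(1)] .
  with h2(2) have "spreads_into (\<F> \<union> \<G>) (g \<circ> (h1 \<circ> h2)) \<A>"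
    unfolding spreads_into_def comp_assoc by blast
  moreover have "strict_mono (h1 \<circ> h2)" using h1(1) h2(1) by (rule strict_mono_o)
  ultimately show "\<exists>h. strict_mono h \<and> spreads_into (\<F> \<union> \<G>) (g \<circ> h) \<A>" by blast
qed

lemma seq_large_UN:
  assumes "finite D" "\<And>c. c \<in> D \<Longrightarrow> spreading (G c)" "\<And>c. c \<in> D \<Longrightarrow> seq_large (G c) \<A> P"
  shows "seq_large (\<Union>c\<in>D. G c) \<A> P"
  using assms
proof (induction D rule: finite_induct)
  case empty
  show ?case unfolding seq_large_def spreads_into_def by (auto intro: strict_mono_id)
next
  case (insert c D)
  then show ?case by (simp add: seq_large_Un)
qed

lemma seq_large_diagonal:
  assumes spreading: "\<And>i. spreading (\<F> i)" and large: "\<And>i. seq_large (\<F> i) \<A> P"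
    and empty: "{} \<in> \<A>" and \<G>: "\<G> \<subseteq> {{}} \<union> {E. finite E \<and> E \<in> \<F> (Min E)}"
  shows "seq_large \<G> \<A> P"
  unfolding seq_large_def
proof (intro allI impI)
  fix g :: "nat \<Rightarrow> nat" assume g: "strict_mono g \<and> range g \<subseteq> P"
  define Q where "Q i s \<longleftrightarrow> spreads_into (\<F> i) (g \<circ> s) \<A>" for i s
  interpret subseqs Q
  proof
    fix i and s :: "nat \<Rightarrow> nat" assume "strict_mono s"
    then have "strict_mono (g \<circ> s)" "range (g \<circ> s) \<subseteq> P"
      using g strict_mono_o by auto
    then obtain r where "strict_mono r" "spreads_into (\<F> i) (g \<circ> s \<circ> r) \<A>"
      using seq_largeD[OF large] by blast
    then show "\<exists>r. strict_mono r \<and> Q i (s \<circ> r)"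
      unfolding Q_def comp_assoc by blast
  qed
  have "spreads_into \<G> (g \<circ> (diagseq \<circ> Suc)) \<A>"
    unfolding spreads_into_def
  proof
    fix E assume "E \<in> \<G>"
    show "(g \<circ> (diagseq \<circ> Suc)) ` E \<in> \<A>"
    proof (cases "E = {}")
      case False
      define i where "i = Min E"
      have E: "finite E" "E \<in> \<F> i" using \<G> \<open>E \<in> \<G>\<close> False unfolding i_def by auto
      \<comment> \<open>beyond \<open>i\<close>, the shifted diagonal runs inside the \<open>i\<close>-th subsequence, at indices \<open>\<phi> j \<ge> j\<close>\<close>
      define \<phi> where "\<phi> j = fold_reduce (Suc i) (j - i) (Suc j)" for j
      have diag: "diagseq (Suc j) = seqseq (Suc i) (\<phi> j)" if "j \<in> E" for j
        using diagseq_sub[of "Suc i" "Suc j"] that E(1) unfolding i_def \<phi>_def by simp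
      have "\<phi> ` E \<in> \<F> i"
        using spreadingD[OF spreading E(2)] seq_suble[OF subseq_fold_reduce]
        unfolding \<phi>_def by (meson Suc_leD)
      then have "(g \<circ> seqseq (Suc i)) ` (\<phi> ` E) \<in> \<A>"
        using seqseq_holds[of i] unfolding Q_def spreads_into_def by blast
      moreover have "(g \<circ> seqseq (Suc i)) ` (\<phi> ` E) = (g \<circ> (diagseq \<circ> Suc)) ` E"
        using diag by (auto simp: image_comp)
      ultimately show ?thesis by simp
    qed (simp add: empty)
  qed
  moreover have "strict_mono (diagseq \<circ> Suc)"
    using subseq_diagseq by (simp add: strict_mono_Suc_iff)
  ultimately show "\<exists>h. strict_mono h \<and> spreads_into \<G> (g \<circ> h) \<A>" by blast
qed

section \<open>The transfinite family\<close>

locale transfinite =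
  fixes w1 :: "'o::wellorder" and A :: "nat \<Rightarrow> 'o \<Rightarrow> 'o set"
    and F :: "'o \<Rightarrow> nat set set"
  assumes omega1: "is_omega1 w1"
    and admissible: "admissible_A w1 A"
    and family: "transfinite_family w1 A F"
begin

lemma countable_below: "x < w1 \<Longrightarrow> countable {y. y < x}"
  using omega1 unfolding is_omega1_def by blast

lemma uncountable_below_w1: "uncountable {y. y < w1}"
  using omega1 unfolding is_omega1_def by blast

lemma osuc_less_w1:
  assumes "b < w1"
  shows "osuc b < w1"
proof (rule ccontr)
  assume "\<not> osuc b < w1"
  then have "{y. y < w1} \<subseteq> insert b {y. y < b}"
    using osuc_least[OF assms] less_osuc_iff[OF assms] by fastforce
  moreover have "countable (insert b {y. y < b})"
    using countable_below[OF assms] by simp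
  ultimately show False
    using uncountable_below_w1 countable_subset by blast
qed

lemma F_zero: "a < w1 \<Longrightarrow> is_zero a \<Longrightarrow> F a = {{}}"
  using family unfolding transfinite_family_def by (simp only:)

lemma F_osuc: "b < w1 \<Longrightarrow> F (osuc b) = {insert n E | n E. E \<in> F b} \<union> {{}}"
  using family osuc_less_w1 unfolding transfinite_family_def by (simp only:)

lemma F_limit: "a < w1 \<Longrightarrow> is_limit a \<Longrightarrow>
    F a = {{}} \<union> {E. E \<noteq> {} \<and> E \<in> (\<Union>b\<in>A (Min E) a. F b)}"
  using family unfolding transfinite_family_def by (simp only:)

lemma A_finite: "a < w1 \<Longrightarrow> is_limit a \<Longrightarrow> finite (A n a)"
  using admissible unfolding admissible_A_def by simp

lemma A_less: "a < w1 \<Longrightarrow> is_limit a \<Longrightarrow> c \<in> A n a \<Longrightarrow> c < a"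
  using admissible unfolding admissible_A_def by auto

lemma A_mono:
  assumes "a < w1" "is_limit a" "n \<le> n'"
  shows "A n a \<subseteq> A n' a"
proof -
  have "\<forall>n. A n a \<subseteq> A (Suc n) a"
    using admissible assms(1,2) unfolding admissible_A_def by simp
  then show ?thesis
    using lift_Suc_mono_le[of "\<lambda>n. A n a"] assms(3) by blast
qed

lemma A_cofinal: "a < w1 \<Longrightarrow> is_limit a \<Longrightarrow> b < a \<Longrightarrow> \<exists>n. \<exists>d\<in>A n a. b \<le> d"
  using admissible unfolding admissible_A_def by simp

lemma F_limit_memE:
  assumes "a < w1" "is_limit a" "E \<in> F a" "E \<noteq> {}"
  obtains c where "c \<in> A (Min E) a" "E \<in> F c"
  using assms unfolding F_limit[OF assms(1,2)] by blast

lemma F_limit_memI: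
  assumes "a < w1" "is_limit a" "c \<in> A n a" "n \<le> Min E" "E \<in> F c"
  shows "E \<in> F a"
proof -
  have "c \<in> A (Min E) a" using A_mono assms(1-4) by blast
  with assms(5) show ?thesis by (subst F_limit[OF assms(1,2)]) blast
qed

lemma F_empty:
  assumes "a < w1"
  shows "{} \<in> F a"
proof (cases a rule: ordinal_cases)
  case (osuc b)
  then have "b < w1" using assms order.strict_trans by blast
  with osuc show ?thesis by (simp add: F_osuc)
qed (auto simp: assms F_zero F_limit[OF assms])

lemma F_finite: "a < w1 \<Longrightarrow> E \<in> F a \<Longrightarrow> finite E"
proof (induction a arbitrary: E rule: ordinal_induct)
  case (limit a)
  show ?case
  proof (cases "E = {}")
    case False
    with limit obtain c where "c \<in> A (Min E) a" "E \<in> F c"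
      by (blast elim: F_limit_memE)
    with limit show ?thesis
      using A_less by (meson order.strict_trans)
  qed simp
qed (auto simp: F_zero F_osuc)

lemma F_subset_F_osuc:
  assumes "b < w1"
  shows "F b \<subseteq> F (osuc b)"
proof
  fix E assume E: "E \<in> F b"
  show "E \<in> F (osuc b)"
  proof (cases "E = {}")
    case False
    then obtain x where "E = insert x E" by blast
    with E show ?thesis unfolding F_osuc[OF assms] by blast
  qed (simp add: F_osuc[OF assms])
qed

lemma F_spreading: "a < w1 \<Longrightarrow> spreading (F a)"
proof (induction a rule: ordinal_induct)
  case (zero a)
  then show ?case by (simp add: F_zero spreading_def)
next
  case (osuc b)
  have b: "b < w1" using osuc.prems osuc.hyps(1) by (rule order.strict_trans[rotated])
  show ?case unfolding spreading_def
  proof (intro ballI allI impI)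
    fix E f assume E: "E \<in> F (osuc b)" and f: "\<forall>x\<in>E. x \<le> f x"
    show "f ` E \<in> F (osuc b)"
    proof (cases "E = {}")
      case False
      then obtain n E0 where E0: "E = insert n E0" "E0 \<in> F b"
        using E unfolding F_osuc[OF b] by blast
      then have "f ` E0 \<in> F b" using osuc.IH[OF b] f by (auto elim: spreadingD)
      then show ?thesis unfolding F_osuc[OF b] E0(1) by blast
    qed (simp add: F_osuc[OF b])
  qed
next
  case (limit a)
  show ?case unfolding spreading_def
  proof (intro ballI allI impI)
    fix E f assume E: "E \<in> F a" and f: "\<forall>x\<in>E. x \<le> f x"
    show "f ` E \<in> F a"
    proof (cases "E = {}")
      case False
      with limit E obtain c where c: "c \<in> A (Min E) a" "E \<in> F c"
        by (blast elim: F_limit_memE)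
      have "c < a" using A_less c(1) limit by blast
      have "finite E" using F_finite limit.prems E .
      then have "Min E \<le> Min (f ` E)"
        using False f by (auto simp: Min.bounded_iff intro: order_trans[OF Min_le])
      moreover have "f ` E \<in> F c"
        using limit.IH[OF \<open>c < a\<close>] \<open>c < a\<close> limit.prems c(2) f
        by (meson order.strict_trans spreadingD)
      ultimately show ?thesis using F_limit_memI[OF limit.prems limit.hyps(1) c(1)] by blast
    qed (use E in simp)
  qed
qed

lemma F_downward_closed: "a < w1 \<Longrightarrow> E \<in> F a \<Longrightarrow> E' \<subseteq> E \<Longrightarrow> E' \<in> F a"
proof (induction a arbitrary: E E' rule: ordinal_induct)
  case (zero a)
  then show ?case by (simp add: F_zero)
next
  case (osuc b)
  have b: "b < w1" using osuc.prems(1) osuc.hyps(1) by (rule order.strict_trans[rotated])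
  show ?case
  proof (cases "E = {}")
    case False
    then obtain n E0 where E0: "E = insert n E0" "E0 \<in> F b"
      using osuc.prems(2) unfolding F_osuc[OF b] by blast
    show ?thesis
    proof (cases "n \<in> E'")
      case True
      have "E' - {n} \<in> F b" using osuc.IH[OF b E0(2)] osuc.prems(3) E0(1) by blast
      then have "insert n (E' - {n}) \<in> F (osuc b)" unfolding F_osuc[OF b] by blast
      with True show ?thesis by (simp add: insert_absorb)
    next
      case False
      then have "E' \<in> F b" using osuc.IH[OF b E0(2)] osuc.prems(3) E0(1) by blast
      then show ?thesis using F_subset_F_osuc[OF b] by blast
    qed
  qed (use osuc.prems in simp)
next
  case (limit a)
  show ?case
  proof (cases "E' = {}")
    case False
    with limit.prems obtain c where c: "c \<in> A (Min E) a" "E \<in> F c"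
      by (blast elim: F_limit_memE[OF limit.prems(1) limit.hyps(1)])
    have "c < a" using A_less c(1) limit by blast
    have "finite E" using F_finite limit.prems(1,2) .
    then have "Min E \<le> Min E'"
      using False limit.prems(3) by (meson Min_antimono)
    moreover have "E' \<in> F c"
      using limit.IH[OF \<open>c < a\<close>] \<open>c < a\<close> limit.prems c(2) by auto
    ultimately show ?thesis using F_limit_memI[OF limit.prems(1) limit.hyps(1) c(1)] by blast
  qed (use F_empty limit.prems in blast)
qed

lemma F_tail_subset:
  assumes "\<alpha> \<le> \<beta>" "\<beta> < w1"
  shows "\<exists>m. \<forall>E\<in>F \<alpha>. E \<subseteq> {m..} \<longrightarrow> E \<in> F \<beta>"
  using assms
proof (induction \<beta> rule: ordinal_induct)
  case (zero \<beta>)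
  then have "\<alpha> = \<beta>" unfolding is_zero_def using le_less by blast
  then show ?case by blast
next
  case (osuc b)
  show ?case
  proof (cases "\<alpha> = osuc b")
    case False
    have b: "b < w1" using osuc.prems(2) osuc.hyps(1) by (rule order.strict_trans[rotated])
    have "\<alpha> < osuc b" using False osuc.prems(1) by simp
    then have "\<alpha> \<le> b" using less_osuc_iff[OF osuc.hyps(1)] by blast
    then obtain m where "\<forall>E\<in>F \<alpha>. E \<subseteq> {m..} \<longrightarrow> E \<in> F b"
      using osuc.IH b by blast
    then show ?thesis using F_subset_F_osuc[OF b] by blast
  qed auto
next
  case (limit \<beta>)
  show ?case
  proof (cases "\<alpha> = \<beta>")
    case False
    then have "\<alpha> < \<beta>" using limit.prems(1) by simp
    then obtain n d where d: "d \<in> A n \<beta>" "\<alpha> \<le> d"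
      using A_cofinal limit.hyps(1) limit.prems(2) by blast
    have "d < \<beta>" using A_less d(1) limit.hyps(1) limit.prems(2) by blast
    then obtain m where m: "\<forall>E\<in>F \<alpha>. E \<subseteq> {m..} \<longrightarrow> E \<in> F d"
      using limit.IH d(2) limit.prems(2) order.strict_trans by blast
    have "E \<in> F \<beta>" if E: "E \<in> F \<alpha>" "E \<subseteq> {max m n..}" for E
    proof (cases "E = {}")
      case False
      have "finite E" using F_finite E(1) \<open>\<alpha> < \<beta>\<close> limit.prems(2) order.strict_trans by blast
      then have "n \<le> Min E" using False E(2) by auto
      moreover have "E \<in> F d" using m E by (meson atLeast_subset_iff max.cobounded1 order_trans)
      ultimately show ?thesis using F_limit_memI[OF limit.prems(2) limit.hyps(1) d(1)] by blast
    qed (use F_empty limit.prems(2) in blast)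
    then show ?thesis by blast
  qed auto
qed

lemma F_shift_into:
  assumes "b \<le> \<delta>" "\<delta> < w1"
  obtains m where "\<And>E. E \<in> F b \<Longrightarrow> (\<lambda>i. i + m) ` E \<in> F \<delta>"
proof -
  obtain m where m: "\<forall>E\<in>F b. E \<subseteq> {m..} \<longrightarrow> E \<in> F \<delta>"
    using F_tail_subset assms by blast
  have "(\<lambda>i. i + m) ` E \<in> F \<delta>" if "E \<in> F b" for E
  proof -
    have "(\<lambda>i. i + m) ` E \<in> F b"
      using spreadingD[OF F_spreading that] assms by force
    with m show ?thesis by auto
  qed
  then show thesis by (rule that)
qed

lemma seq_large_F_down:
  assumes "b \<le> \<delta>" "\<delta> < w1" "seq_large (F \<delta>) \<A> P"
  shows "seq_large (F b) \<A> P"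
proof -
  obtain m where "\<And>E. E \<in> F b \<Longrightarrow> (\<lambda>i. i + m) ` E \<in> F \<delta>"
    using F_shift_into assms(1,2) by blast
  moreover have "strict_mono (\<lambda>i::nat. i + m)" by (simp add: strict_mono_def)
  ultimately show ?thesis
    using seq_large_transfer assms(3) by blast
qed

lemma never_spreads_into_F_up:
  assumes "b \<le> \<delta>" "\<delta> < w1" "never_spreads_into (F b) \<A>"
  shows "never_spreads_into (F \<delta>) \<A>"
proof -
  obtain m where "\<And>E. E \<in> F b \<Longrightarrow> (\<lambda>i. i + m) ` E \<in> F \<delta>"
    using F_shift_into assms(1,2) by blast
  moreover have "strict_mono (\<lambda>i::nat. i + m)" by (simp add: strict_mono_def)
  ultimately show ?thesis
    using never_spreads_into_transfer assms(3) by blast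
qed

lemma seq_large_F_limit:
  assumes l: "l < w1" "is_limit l" and empty: "{} \<in> \<A>"
    and large: "\<And>b. b < l \<Longrightarrow> seq_large (F b) \<A> P"
  shows "seq_large (F l) \<A> P"
proof (rule seq_large_diagonal)
  have below: "c < w1" if "c \<in> A i l" for c i
    using A_less[OF l that] l(1) by (rule order.strict_trans)
  show "spreading (\<Union>c\<in>A i l. F c)" for i
    by (intro spreading_UN F_spreading below)
  show "seq_large (\<Union>c\<in>A i l. F c) \<A> P" for i
  proof (rule seq_large_UN[OF A_finite[OF l]])
    fix c assume c: "c \<in> A i l"
    show "spreading (F c)" using c by (intro F_spreading below)
    show "seq_large (F c) \<A> P" using A_less[OF l c] by (rule large)
  qed
  show "F l \<subseteq> {{}} \<union> {E. finite E \<and> E \<in> (\<Union>c\<in>A (Min E) l. F c)}"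
  proof
    fix E assume E: "E \<in> F l"
    then have "E \<in> {{}} \<union> {E. E \<noteq> {} \<and> E \<in> (\<Union>c\<in>A (Min E) l. F c)}"
      using F_limit[OF l] by simp
    then show "E \<in> {{}} \<union> {E. finite E \<and> E \<in> (\<Union>c\<in>A (Min E) l. F c)}"
      using F_finite[OF l(1) E] by blast
  qed
qed (rule empty)

lemma spreads_into_F_osuc_sqcup:
  assumes c: "c < w1" and \<alpha>: "\<alpha> < w1"
    and tail: "\<forall>E\<in>F (osuc \<alpha>). E \<subseteq> {m..} \<longrightarrow> E \<in> F \<beta>" and empty: "{} \<in> F \<beta>" "{} \<in> F \<gamma>"
    and into: "spreads_into (F c) k (sqcup (F \<alpha>) (F \<gamma>))" and above: "\<And>i. m \<le> k i"
  shows "spreads_into (F (osuc c)) k (sqcup (F \<beta>) (F \<gamma>))"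
  unfolding spreads_into_def
proof
  fix E assume "E \<in> F (osuc c)"
  show "k ` E \<in> sqcup (F \<beta>) (F \<gamma>)"
  proof (cases "E = {}")
    case True
    with empty show ?thesis unfolding sqcup_def by blast
  next
    case False
    then obtain n E0 where E0: "E = insert n E0" "E0 \<in> F c"
      using \<open>E \<in> F (osuc c)\<close> unfolding F_osuc[OF c] by blast
    then have "k ` E0 \<in> sqcup (F \<alpha>) (F \<gamma>)"
      using into unfolding spreads_into_def by blast
    then obtain X Z where XZ: "k ` E0 = X \<union> Z" "X \<in> F \<alpha>" "Z \<in> F \<gamma>"
      unfolding sqcup_def by blast
    have "insert (k n) X \<in> F (osuc \<alpha>)"
      using XZ(2) unfolding F_osuc[OF \<alpha>] by blast
    moreover have "insert (k n) X \<subseteq> {m..}"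
    proof -
      have "insert (k n) X \<subseteq> range k" using XZ(1) by blast
      then show ?thesis using above by auto
    qed
    ultimately have "insert (k n) X \<in> F \<beta>" using tail by blast
    moreover have "k ` E = insert (k n) X \<union> Z" using E0(1) XZ(1) by simp
    ultimately show ?thesis using XZ(3) unfolding sqcup_def by blast
  qed
qed

lemma seq_large_F_osuc_sqcup:
  assumes "\<alpha> < \<beta>" "\<beta> < w1" "\<gamma> < w1" "c < w1"
    and large: "seq_large (F c) (sqcup (F \<alpha>) (F \<gamma>)) P"
  shows "seq_large (F (osuc c)) (sqcup (F \<beta>) (F \<gamma>)) P"
  unfolding seq_large_def
proof (intro allI impI)
  fix g :: "nat \<Rightarrow> nat" assume g: "strict_mono g \<and> range g \<subseteq> P"
  have \<alpha>: "\<alpha> < w1" using assms(1,2) by (rule order.strict_trans)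
  obtain m where tail: "\<forall>E\<in>F (osuc \<alpha>). E \<subseteq> {m..} \<longrightarrow> E \<in> F \<beta>"
    using F_tail_subset osuc_least[OF assms(1)] assms(2) by blast
  have shift: "strict_mono (\<lambda>i. i + m)" by (simp add: strict_mono_def)
  then have "strict_mono (g \<circ> (\<lambda>i. i + m))" "range (g \<circ> (\<lambda>i. i + m)) \<subseteq> P"
    using g strict_mono_o by auto
  then obtain h where h: "strict_mono h"
      "spreads_into (F c) (g \<circ> (\<lambda>i. i + m) \<circ> h) (sqcup (F \<alpha>) (F \<gamma>))"
    using seq_largeD[OF large] by blast
  have "m \<le> (g \<circ> (\<lambda>i. i + m) \<circ> h) i" for i
    using strict_mono_imp_increasing[of g "h i + m"] g by simp
  then have "spreads_into (F (osuc c)) (g \<circ> ((\<lambda>i. i + m) \<circ> h)) (sqcup (F \<beta>) (F \<gamma>))"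
    using spreads_into_F_osuc_sqcup[OF assms(4) \<alpha> tail _ _ h(2)] F_empty assms(2,3)
    by (simp add: comp_assoc)
  moreover have "strict_mono ((\<lambda>i. i + m) \<circ> h)" using shift h(1) by (rule strict_mono_o)
  ultimately show "\<exists>h. strict_mono h \<and> spreads_into (F (osuc c)) (g \<circ> h) (sqcup (F \<beta>) (F \<gamma>))"
    by blast
qed

end

section \<open>Removing minimal elements\<close>

definition pred_levels :: "(nat \<Rightarrow> 'o::wellorder \<Rightarrow> 'o set) \<Rightarrow> 'o \<Rightarrow> nat \<Rightarrow> 'o set" where
  "pred_levels A a x = (if is_limit a then A x a else {b. b < a \<and> osuc b = a})"

definition lower_pairs ::
    "(nat \<Rightarrow> 'o::wellorder \<Rightarrow> 'o set) \<Rightarrow> 'o \<times> 'o \<Rightarrow> nat \<Rightarrow> ('o \<times> 'o) set" where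
  "lower_pairs A p x =
     (\<lambda>c. (c, snd p)) ` pred_levels A (fst p) x \<union> (\<lambda>c. (fst p, c)) ` pred_levels A (snd p) x"

definition peel :: "(nat \<Rightarrow> 'o::wellorder \<Rightarrow> 'o set) \<Rightarrow> ('o \<times> 'o) multiset \<Rightarrow> nat \<Rightarrow> ('o \<times> 'o) multiset" where
  "peel A M x = (\<Sum>p\<in>#M. mset_set (lower_pairs A p x))"

definition pair_union :: "('o \<Rightarrow> nat set set) \<Rightarrow> ('o \<times> 'o) multiset \<Rightarrow> nat set set" where
  "pair_union F M = (\<Union>p\<in>set_mset M. sqcup (F (fst p)) (F (snd p)))"

definition lex_less :: "(('o::wellorder \<times> 'o) \<times> ('o \<times> 'o)) set" where
  "lex_less = {(x, y). x < y} <*lex*> {(x, y). x < y}"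

lemma wf_lex_less: "wf lex_less"
  unfolding lex_less_def by (intro wf_lex_prod wellorder_class.wf)

context transfinite
begin

lemma pred_levels_finite: "a < w1 \<Longrightarrow> finite (pred_levels A a x)"
  unfolding pred_levels_def by (simp add: A_finite finite_osuc_preimage)

lemma pred_levels_less: "a < w1 \<Longrightarrow> c \<in> pred_levels A a x \<Longrightarrow> c < a"
  unfolding pred_levels_def by (auto split: if_splits dest: A_less)

lemma F_remove_min:
  assumes a: "a < w1" and X: "X \<in> F a" "x0 \<in> X" and min: "\<forall>y\<in>X. x0 \<le> y"
  shows "\<exists>c\<in>pred_levels A a x0. X - {x0} \<in> F c"
proof (cases a rule: ordinal_cases)
  case zero
  then show ?thesis using F_zero[OF a] X by simp
next
  case limit
  have "Min X = x0" using F_finite[OF a X(1)] X(2) min by (intro Min_eqI) auto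
  then obtain c where c: "c \<in> A x0 a" "X \<in> F c"
    using F_limit_memE[OF a limit X(1)] X(2) by blast
  have "c < w1" using A_less[OF a limit c(1)] a by (rule order.strict_trans)
  then have "X - {x0} \<in> F c" using F_downward_closed c(2) by blast
  moreover have "c \<in> pred_levels A a x0" unfolding pred_levels_def using limit c(1) by simp
  ultimately show ?thesis by blast
next
  case (osuc b)
  have b: "b < w1" using osuc(1) a by (rule order.strict_trans)
  have "b \<in> pred_levels A a x0"
    unfolding pred_levels_def using osuc osuc_not_limit by auto
  moreover obtain n E0 where E0: "X = insert n E0" "E0 \<in> F b"
    using X unfolding osuc(2) F_osuc[OF b] by blast
  have "X - {x0} \<in> F b"
  proof (cases "n = x0")
    case True
    then have "X - {x0} \<subseteq> E0" using E0(1) by blast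
    then show ?thesis by (rule F_downward_closed[OF b E0(2)])
  next
    case False
    \<comment> \<open>here \<open>x0 \<in> E0\<close>: trade it for \<open>n\<close> by spreading\<close>
    have "X - {n} \<subseteq> E0" using E0(1) by blast
    then have "X - {n} \<in> F b" by (rule F_downward_closed[OF b E0(2)])
    moreover have "x0 \<le> n" using min E0(1) by blast
    ultimately have "(id(x0 := n)) ` (X - {n}) \<in> F b"
      by (intro spreadingD[OF F_spreading[OF b]]) auto
    moreover have "(id(x0 := n)) ` (X - {n}) = X - {x0}"
    proof -
      have "X - {n} = insert x0 (X - {n, x0})" using False X(2) by blast
      then have "(id(x0 := n)) ` (X - {n}) = insert n (X - {n, x0})"
        by (simp add: fun_upd_image) blast
      also have "\<dots> = X - {x0}" using False E0(1) by blast
      finally show ?thesis .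
    qed
    ultimately show ?thesis by simp
  qed
  ultimately show ?thesis by blast
qed

lemma sqcup_remove_min:
  assumes a: "a < w1" and b: "b < w1" and T: "insert x0 Y \<in> sqcup (F a) (F b)"
    and above: "\<forall>y\<in>Y. x0 < y"
  shows "\<exists>q\<in>lower_pairs A (a, b) x0. Y \<in> sqcup (F (fst q)) (F (snd q))"
proof -
  obtain X Z where XZ: "insert x0 Y = X \<union> Z" "X \<in> F a" "Z \<in> F b"
    using T unfolding sqcup_def by blast
  have Y: "Y = (X - {x0}) \<union> (Z - {x0})" using XZ(1) above by blast
  have min: "\<forall>y\<in>X. x0 \<le> y" "\<forall>y\<in>Z. x0 \<le> y"
    using XZ(1) above by (auto intro: less_imp_le)
  have "x0 \<in> X \<or> x0 \<in> Z" using XZ(1) by blast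
  then show ?thesis
  proof
    assume "x0 \<in> X"
    then obtain c where c: "c \<in> pred_levels A a x0" "X - {x0} \<in> F c"
      using F_remove_min[OF a XZ(2) _ min(1)] by blast
    have "Z - {x0} \<in> F b" using F_downward_closed[OF b XZ(3)] by blast
    then have "Y \<in> sqcup (F c) (F b)" using c(2) Y unfolding sqcup_def by blast
    moreover have "(c, b) \<in> lower_pairs A (a, b) x0" using c(1) unfolding lower_pairs_def by simp
    ultimately show ?thesis by force
  next
    assume "x0 \<in> Z"
    then obtain c where c: "c \<in> pred_levels A b x0" "Z - {x0} \<in> F c"
      using F_remove_min[OF b XZ(3) _ min(2)] by blast
    have "X - {x0} \<in> F a" using F_downward_closed[OF a XZ(2)] by blast
    then have "Y \<in> sqcup (F a) (F c)" using c(2) Y unfolding sqcup_def by blast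
    moreover have "(a, c) \<in> lower_pairs A (a, b) x0" using c(1) unfolding lower_pairs_def by simp
    ultimately show ?thesis by force
  qed
qed

lemma lower_pairs_less:
  assumes p: "fst p < w1" "snd p < w1" and q: "q \<in> lower_pairs A p x"
  shows "(q, p) \<in> lex_less \<and> fst q < w1 \<and> snd q < w1"
proof -
  from q consider c where "c \<in> pred_levels A (fst p) x" "q = (c, snd p)"
    | c where "c \<in> pred_levels A (snd p) x" "q = (fst p, c)"
    unfolding lower_pairs_def by blast
  then show ?thesis
  proof cases
    case 1
    then have "c < fst p" using pred_levels_less p(1) by blast
    then show ?thesis using 1(2) p unfolding lex_less_def by (cases p) auto
  next
    case 2
    then have "c < snd p" using pred_levels_less p(2) by blast
    then show ?thesis using 2(2) p unfolding lex_less_def by (cases p) auto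
  qed
qed

lemma mem_peel_iff:
  assumes "\<forall>p\<in>#M. fst p < w1 \<and> snd p < w1"
  shows "q \<in># peel A M x \<longleftrightarrow> (\<exists>p\<in>#M. q \<in> lower_pairs A p x)"
proof -
  have "finite (lower_pairs A p x)" if "p \<in># M" for p
    using assms that pred_levels_finite unfolding lower_pairs_def by blast
  then show ?thesis unfolding peel_def by auto
qed

lemma peel_below_w1:
  "\<forall>p\<in>#M. fst p < w1 \<and> snd p < w1 \<Longrightarrow> \<forall>q\<in>#peel A M x. fst q < w1 \<and> snd q < w1"
  using mem_peel_iff lower_pairs_less by blast

lemma peel_mult_less:
  assumes "M \<noteq> {#}" and M: "\<forall>p\<in>#M. fst p < w1 \<and> snd p < w1"
  shows "(peel A M x, M) \<in> mult lex_less"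
proof -
  have "\<exists>p\<in>#M. (q, p) \<in> lex_less" if "q \<in># peel A M x" for q
    using that lower_pairs_less M unfolding mem_peel_iff[OF M] by blast
  then have "({#} + peel A M x, {#} + M) \<in> mult lex_less"
    using one_step_implies_mult[OF assms(1)] by blast
  then show ?thesis by simp
qed

lemma pair_union_remove_min:
  assumes M: "\<forall>p\<in>#M. fst p < w1 \<and> snd p < w1"
    and T: "insert x0 Y \<in> pair_union F M" and above: "\<forall>y\<in>Y. x0 < y"
  shows "Y \<in> pair_union F (peel A M x0)"
proof -
  obtain p where p: "p \<in># M" "insert x0 Y \<in> sqcup (F (fst p)) (F (snd p))"
    using T unfolding pair_union_def by blast
  moreover have "fst p < w1" "snd p < w1" using M p(1) by auto
  ultimately obtain q where "q \<in> lower_pairs A p x0" "Y \<in> sqcup (F (fst q)) (F (snd q))"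
    using sqcup_remove_min[of "fst p" "snd p" x0 Y] above by auto
  then show ?thesis
    using mem_peel_iff[OF M] p(1) unfolding pair_union_def by blast
qed

lemma bounded_below_w1:
  assumes "\<And>x::nat. \<delta> x < w1"
  obtains s where "s < w1" "\<And>x. \<delta> x \<le> s"
proof -
  have "countable (\<Union>x. insert (\<delta> x) {y. y < \<delta> x})"
    using countable_below assms by (intro countable_UN) auto
  then have "\<not> {y. y < w1} \<subseteq> (\<Union>x. insert (\<delta> x) {y. y < \<delta> x})"
    using uncountable_below_w1 countable_subset by blast
  then obtain s where "s < w1" "s \<notin> (\<Union>x. insert (\<delta> x) {y. y < \<delta> x})"
    by blast
  then show thesis using that not_le by blast
qed

lemma never_spreads_into_F_osuc:
  assumes s: "s < w1" and M: "\<forall>p\<in>#M. fst p < w1 \<and> snd p < w1"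
    and never: "\<And>x. never_spreads_into (F s) (pair_union F (peel A M x))"
  shows "never_spreads_into (F (osuc s)) (pair_union F M)"
  unfolding never_spreads_into_def
proof (intro allI impI notI)
  fix g :: "nat \<Rightarrow> nat" assume g: "strict_mono g" and into: "spreads_into (F (osuc s)) g (pair_union F M)"
  \<comment> \<open>a witness for the tail \<open>g \<circ> Suc\<close> at level \<open>s\<close>, with \<open>0\<close> prepended, is a witness for \<open>g\<close>\<close>
  have "strict_mono (g \<circ> Suc)" using g by (simp add: strict_mono_Suc_iff)
  then obtain E where E: "E \<in> F s" "(g \<circ> Suc) ` E \<notin> pair_union F (peel A M (g 0))"
    using never unfolding never_spreads_into_def spreads_into_def by blast
  have "Suc ` E \<in> F s" using spreadingD[OF F_spreading[OF s] E(1)] by simp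
  then have "insert 0 (Suc ` E) \<in> F (osuc s)" unfolding F_osuc[OF s] by blast
  then have "g ` insert 0 (Suc ` E) \<in> pair_union F M"
    using into unfolding spreads_into_def by blast
  then have "insert (g 0) ((g \<circ> Suc) ` E) \<in> pair_union F M"
    by (simp add: image_image)
  moreover have "\<forall>y\<in>(g \<circ> Suc) ` E. g 0 < y" using g by (auto simp: strict_mono_less)
  ultimately show False using pair_union_remove_min[OF M] E(2) by blast
qed

lemma exists_never_spreads_into:
  "\<forall>p\<in>#M. fst p < w1 \<and> snd p < w1 \<Longrightarrow> \<exists>\<delta><w1. never_spreads_into (F \<delta>) (pair_union F M)"
proof (induction M rule: wf_induct_rule[OF wf_mult[OF wf_lex_less]])
  case (1 M)
  show ?case
  proof (cases "M = {#}")
    case True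
    obtain z where "z < w1" using uncountable_below_w1 by fastforce
    moreover have "never_spreads_into (F z) (pair_union F M)"
      using F_empty[OF \<open>z < w1\<close>] True
      unfolding never_spreads_into_def spreads_into_def pair_union_def by auto
    ultimately show ?thesis by blast
  next
    case False
    have "\<exists>\<delta><w1. never_spreads_into (F \<delta>) (pair_union F (peel A M x))" for x
      using "1.IH" peel_mult_less[OF False "1.prems"] peel_below_w1[OF "1.prems"] by blast
    then obtain \<delta> where \<delta>: "\<And>x. \<delta> x < w1" "\<And>x. never_spreads_into (F (\<delta> x)) (pair_union F (peel A M x))"
      by metis
    obtain s where s: "s < w1" "\<And>x. \<delta> x \<le> s" using bounded_below_w1 \<delta>(1) by blast
    have "never_spreads_into (F s) (pair_union F (peel A M x))" for x
      using never_spreads_into_F_up[OF s(2) s(1) \<delta>(2)] .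
    then have "never_spreads_into (F (osuc s)) (pair_union F M)"
      using never_spreads_into_F_osuc[OF s(1) "1.prems"] by blast
    then show ?thesis using osuc_less_w1[OF s(1)] by blast
  qed
qed

end

section \<open>The index\<close>

context transfinite
begin

lemma large_index_ge:
  assumes "\<delta> < w1" "seq_large (F \<delta>) \<A> N"
  shows "\<delta> \<le> large_index w1 F \<A> N"
proof -
  let ?P = "\<lambda>s. s \<le> w1 \<and> (\<forall>a<w1. is_large F a \<A> N \<longrightarrow> a \<le> s)"
  have "?P w1" by auto
  then have "?P (LEAST s. ?P s)" by (rule LeastI)
  then show ?thesis
    using assms unfolding large_index_def is_large_iff_seq_large by blast
qed

lemma large_index_eq:
  assumes c: "c < w1" and large: "seq_large (F c) \<A> N"
    and not_large: "\<not> seq_large (F (osuc c)) \<A> N"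
  shows "large_index w1 F \<A> N = c"
  unfolding large_index_def
proof (rule Least_equality)
  have "a \<le> c" if "a < w1" "seq_large (F a) \<A> N" for a
  proof (rule ccontr)
    assume "\<not> a \<le> c"
    then have "osuc c \<le> a" using osuc_least[of c a] by simp
    then show False using seq_large_F_down that not_large by blast
  qed
  then show "c \<le> w1 \<and> (\<forall>a<w1. is_large F a \<A> N \<longrightarrow> a \<le> c)"
    using c by (simp add: is_large_iff_seq_large)
  show "c \<le> s" if "s \<le> w1 \<and> (\<forall>a<w1. is_large F a \<A> N \<longrightarrow> a \<le> s)" for s
    using that c large by (simp add: is_large_iff_seq_large)
qed

lemma last_large_level:
  assumes empty: "{} \<in> \<A>" and "\<delta> < w1" "\<not> seq_large (F \<delta>) \<A> N"
  obtains c where "c < w1" "seq_large (F c) \<A> N" "\<not> seq_large (F (osuc c)) \<A> N"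
proof -
  define \<delta>' where "\<delta>' = (LEAST \<delta>. \<delta> < w1 \<and> \<not> seq_large (F \<delta>) \<A> N)"
  have \<delta>': "\<delta>' < w1" "\<not> seq_large (F \<delta>') \<A> N"
    using LeastI[of "\<lambda>\<delta>. \<delta> < w1 \<and> \<not> seq_large (F \<delta>) \<A> N"] assms(2,3)
    unfolding \<delta>'_def by blast+
  have below: "seq_large (F b) \<A> N" if "b < \<delta>'" for b
    using not_less_Least[of b "\<lambda>\<delta>. \<delta> < w1 \<and> \<not> seq_large (F \<delta>) \<A> N"] that \<delta>'(1)
    unfolding \<delta>'_def by force
  show thesis
  proof (cases \<delta>' rule: ordinal_cases)
    case zero
    then show ?thesis
      using \<delta>' F_zero seq_large_singleton_empty[OF empty] by metis
  next
    case limit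
    then show ?thesis using \<delta>' seq_large_F_limit[OF \<delta>'(1) limit empty below] by blast
  next
    case (osuc c)
    then show ?thesis using that below \<delta>' order.strict_trans by blast
  qed
qed

end

theorem proposition5p2:
  fixes w1 :: "'o::wellorder" and A :: "nat \<Rightarrow> 'o \<Rightarrow> 'o set"
    and F :: "'o \<Rightarrow> nat set set" and \<alpha> \<beta> \<gamma> :: 'o
  assumes "is_omega1 w1"
    and "admissible_A w1 A"
    and "transfinite_family w1 A F"
    and "\<alpha> < \<beta>" and "\<beta> < w1" and "\<gamma> < w1"
  shows "(\<exists>m::nat. sqcup {E \<in> F \<alpha>. finite E \<and> E \<subseteq> {m..}} (F \<gamma>)
                 \<subseteq> sqcup {E \<in> F \<beta>. finite E \<and> E \<subseteq> {m..}} (F \<gamma>))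
       \<and> (\<forall>N::nat set. infinite N \<longrightarrow>
            large_index w1 F (sqcup (F \<alpha>) (F \<gamma>)) N < large_index w1 F (sqcup (F \<beta>) (F \<gamma>)) N)"
proof (intro conjI allI impI)
  interpret transfinite w1 A F using assms(1-3) by unfold_locales
  have \<alpha>: "\<alpha> < w1" using assms(4,5) by (rule order.strict_trans)
  obtain m where "\<forall>E\<in>F \<alpha>. E \<subseteq> {m..} \<longrightarrow> E \<in> F \<beta>"
    using F_tail_subset assms(4,5) by fastforce
  then show "\<exists>m. sqcup {E \<in> F \<alpha>. finite E \<and> E \<subseteq> {m..}} (F \<gamma>)
                 \<subseteq> sqcup {E \<in> F \<beta>. finite E \<and> E \<subseteq> {m..}} (F \<gamma>)"
    by (intro exI[of _ m] sqcup_mono) auto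
  fix N :: "nat set" assume N: "infinite N"
  have empty: "{} \<in> sqcup (F \<alpha>) (F \<gamma>)"
    using F_empty \<alpha> assms(6) unfolding sqcup_def by blast
  obtain \<delta> where "\<delta> < w1" "never_spreads_into (F \<delta>) (sqcup (F \<alpha>) (F \<gamma>))"
    using exists_never_spreads_into[of "{#(\<alpha>, \<gamma>)#}"] \<alpha> assms(6) by (auto simp: pair_union_def)
  then obtain c where c: "c < w1" "seq_large (F c) (sqcup (F \<alpha>) (F \<gamma>)) N"
      "\<not> seq_large (F (osuc c)) (sqcup (F \<alpha>) (F \<gamma>)) N"
    using last_large_level[OF empty] not_seq_large_if_never_spreads_into N by metis
  have "large_index w1 F (sqcup (F \<alpha>) (F \<gamma>)) N = c"
    using large_index_eq c by blast
  also have "c < osuc c" using less_osuc c(1) by blast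
  also have "osuc c \<le> large_index w1 F (sqcup (F \<beta>) (F \<gamma>)) N"
    using large_index_ge osuc_less_w1[OF c(1)] seq_large_F_osuc_sqcup[OF assms(4-6) c(1,2)] by blast
  finally show "large_index w1 F (sqcup (F \<alpha>) (F \<gamma>)) N < large_index w1 F (sqcup (F \<beta>) (F \<gamma>)) N" .
qed

end
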